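(* Let $\Gamma$ be a finitely generated group and $H\le\Gamma$ an amenable subgroup. If for some finite symmetric generating set $S$ of $\Gamma$ the Schreier graph $\mathrm{Sch}(\Gamma,H,S)$ is extraterrestrial, then $\Gamma$ is extraterrestrial.
   Context: The (right) Schreier graph $\mathrm{Sch}(\Gamma,H,S)$ has vertex set the right cosets $\{Hg:g\in\Gamma\}$, with an edge between $Hg$ and $Hg'$ whenever $Hg'=Hgs$ for some $s\in S$. A graph $G=(V,E)$ (with shortest-path metric $d_G$) is extraterrestrial if for every $m\in\mathbb N$ there exists $k\in\mathbb N$ such that for every $r\in\mathbb N$ there exists an $(m,k,r)$-UFO: a triple $(U,F,O)$ of pairwise disjoint finite subsets of $V$ with $U\ne\emptyset$, $|U|\ge m|F|$, a bijection $\mu:U\to O$ with $d_G(u,\mu(u))\le k$ for all $u\in U$, and such that every path (sequence of distinct vertices, consecutive ones adjacent) from a vertex of $U$ to a vertex of $O$ either contains a vertex of $F$ or has length at least $r$. A finitely generated group is extraterrestrial if its Cayley graph $\mathrm{Cay}(\Gamma,S)$ (edges $\{g,gs\}$) is extraterrestrial for some (equivalently any) finite symmetric generating set $S$. *)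

theory Defs
  imports "HOL-Algebra.Algebra"
begin

definition is_walk :: "'v set \<Rightarrow> ('v \<Rightarrow> 'v \<Rightarrow> bool) \<Rightarrow> 'v list \<Rightarrow> bool" where
  "is_walk V E ps \<longleftrightarrow> ps \<noteq> [] \<and> set ps \<subseteq> V \<and> successively E ps"

definition is_path :: "'v set \<Rightarrow> ('v \<Rightarrow> 'v \<Rightarrow> bool) \<Rightarrow> 'v list \<Rightarrow> bool" where
  "is_path V E ps \<longleftrightarrow> is_walk V E ps \<and> distinct ps"

definition graph_dist_le :: "'v set \<Rightarrow> ('v \<Rightarrow> 'v \<Rightarrow> bool) \<Rightarrow> 'v \<Rightarrow> 'v \<Rightarrow> nat \<Rightarrow> bool" where
  "graph_dist_le V E u v k \<longleftrightarrow>
     (\<exists>ps. is_walk V E ps \<and> hd ps = u \<and> last ps = v \<and> length ps - 1 \<le> k)"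

definition is_UFO :: "'v set \<Rightarrow> ('v \<Rightarrow> 'v \<Rightarrow> bool) \<Rightarrow> nat \<Rightarrow> nat \<Rightarrow> nat
    \<Rightarrow> 'v set \<Rightarrow> 'v set \<Rightarrow> 'v set \<Rightarrow> bool" where
  "is_UFO V E m k r U F Ob \<longleftrightarrow>
     U \<subseteq> V \<and> F \<subseteq> V \<and> Ob \<subseteq> V \<and> finite U \<and> finite F \<and> finite Ob \<and>
     U \<inter> F = {} \<and> U \<inter> Ob = {} \<and> F \<inter> Ob = {} \<and> U \<noteq> {} \<and>
     card U \<ge> m * card F \<and>
     (\<exists>\<mu>. bij_betw \<mu> U Ob \<and> (\<forall>u\<in>U. graph_dist_le V E u (\<mu> u) k)) \<and>
     (\<forall>ps. is_path V E ps \<and> hd ps \<in> U \<and> last ps \<in> Ob \<longrightarrow>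
            set ps \<inter> F \<noteq> {} \<or> length ps - 1 \<ge> r)"

definition extraterrestrial :: "'v set \<Rightarrow> ('v \<Rightarrow> 'v \<Rightarrow> bool) \<Rightarrow> bool" where
  "extraterrestrial V E \<longleftrightarrow>
     (\<forall>m::nat. \<exists>k::nat. \<forall>r::nat. \<exists>U F Ob. is_UFO V E m k r U F Ob)"

definition symmetric_gen_set :: "('a, 'b) monoid_scheme \<Rightarrow> 'a set \<Rightarrow> bool" where
  "symmetric_gen_set G S \<longleftrightarrow> finite S \<and> S \<subseteq> carrier G \<and>
     (\<forall>s\<in>S. inv\<^bsub>G\<^esub> s \<in> S) \<and> generate G S = carrier G"

definition finitely_generated :: "('a, 'b) monoid_scheme \<Rightarrow> bool" where
  "finitely_generated G \<longleftrightarrow> (\<exists>S. finite S \<and> S \<subseteq> carrier G \<and> generate G S = carrier G)"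

definition cayley_adj :: "('a, 'b) monoid_scheme \<Rightarrow> 'a set \<Rightarrow> 'a \<Rightarrow> 'a \<Rightarrow> bool" where
  "cayley_adj G S g g' \<longleftrightarrow> g \<in> carrier G \<and> g' \<in> carrier G \<and>
     (\<exists>s\<in>S. g' = g \<otimes>\<^bsub>G\<^esub> s)"

definition schreier_adj :: "('a, 'b) monoid_scheme \<Rightarrow> 'a set \<Rightarrow> 'a set \<Rightarrow> 'a set \<Rightarrow> 'a set \<Rightarrow> bool" where
  "schreier_adj G H S C C' \<longleftrightarrow> C \<in> rcosets\<^bsub>G\<^esub> H \<and> C' \<in> rcosets\<^bsub>G\<^esub> H \<and>
     (\<exists>s\<in>S. C' = C #>\<^bsub>G\<^esub> s)"

definition extraterrestrial_group :: "('a, 'b) monoid_scheme \<Rightarrow> bool" where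
  "extraterrestrial_group G \<longleftrightarrow>
     (\<exists>S. symmetric_gen_set G S \<and> extraterrestrial (carrier G) (cayley_adj G S))"

definition amenable :: "('a, 'b) monoid_scheme \<Rightarrow> bool" where
  "amenable G \<longleftrightarrow> (\<exists>\<mu> :: 'a set \<Rightarrow> real.
     (\<forall>A. A \<subseteq> carrier G \<longrightarrow> \<mu> A \<ge> 0) \<and>
     \<mu> (carrier G) = 1 \<and>
     (\<forall>A B. A \<subseteq> carrier G \<longrightarrow> B \<subseteq> carrier G \<longrightarrow> A \<inter> B = {} \<longrightarrow>
            \<mu> (A \<union> B) = \<mu> A + \<mu> B) \<and>
     (\<forall>g\<in>carrier G. \<forall>A. A \<subseteq> carrier G \<longrightarrow> \<mu> (g <#\<^bsub>G\<^esub> A) = \<mu> A))"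

end

theory Submission
  imports Defs
begin

text \<open>Take a \<open>(2m, k, r)\<close>-UFO \<open>(U, F, O)\<close> of the Schreier graph, pick a representative \<open>rep C \<in> C\<close>
  of every coset, and for \<open>u \<in> U\<close> let \<open>t u\<close> be the endpoint of a lift, starting at \<open>rep u\<close>, of a
  Schreier path of length \<open>\<le> k\<close> from \<open>u\<close> to its partner in \<open>O\<close>. The elements
  \<open>rep u \<otimes> z \<otimes> inv (rep f)\<close> of \<open>H\<close> with \<open>z\<close> in the \<open>r\<close>-ball of the word metric form a finite set
  \<open>K \<subseteq> H\<close>, and amenability of \<open>H\<close> yields a finite \<open>A \<subseteq> H\<close> with \<open>|A K| < 2 |A|\<close>. The translates
  \<open>A \<otimes> rep U\<close>, \<open>A K \<otimes> rep F\<close> and \<open>A \<otimes> t U\<close> form an \<open>(m, k, r)\<close>-UFO of the Cayley graph: the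
  matching is translated along, a short Cayley path avoiding the middle set would project to a
  short Schreier walk from \<open>U\<close> to \<open>O\<close>, which has to pass through \<open>F\<close>, and the vertex where it
  does lies in \<open>A K \<otimes> rep F\<close>; the factor \<open>2\<close> is absorbed by \<open>|A K| < 2 |A|\<close>.
  The bound \<open>|A K| < 2 |A|\<close> follows from an invariant mean by Hall's marriage theorem for infinite
  families: otherwise \<open>H\<close> would contain two disjoint copies of itself of bounded displacement.\<close>

section \<open>Hall's marriage theorem\<close>

definition hall_condition :: "'l set \<Rightarrow> ('l \<Rightarrow> 'r set) \<Rightarrow> bool" where
  "hall_condition L N \<longleftrightarrow> (\<forall>B\<subseteq>L. finite B \<longrightarrow> card B \<le> card (\<Union> (N ` B)))"

definition remove_edges :: "('l \<Rightarrow> 'r set) \<Rightarrow> ('l \<times> 'r) set \<Rightarrow> 'l \<Rightarrow> 'r set" where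
  "remove_edges N D x = {y \<in> N x. (x, y) \<notin> D}"

lemma hall_condition_remove_edges_Union_chain:
  assumes fin: "\<forall>x\<in>L. finite (N x)"
    and chain: "subset.chain {D. hall_condition L (remove_edges N D)} C" and "C \<noteq> {}"
  shows "hall_condition L (remove_edges N (\<Union>C))"
  unfolding hall_condition_def
proof (intro allI impI)
  fix B assume B: "B \<subseteq> L" "finite B"
  have "finite (Sigma B N)" using B fin by auto
  then obtain D where D: "D \<in> C" "\<Union>C \<inter> Sigma B N \<subseteq> D"
    using finite_subset_Union_chain[of "\<Union>C \<inter> Sigma B N" C] chain \<open>C \<noteq> {}\<close> by blast
  then have "card B \<le> card (\<Union> (remove_edges N D ` B))"
    using chain B unfolding subset_chain_def hall_condition_def by blast
  also have "\<dots> \<le> card (\<Union> (remove_edges N (\<Union>C) ` B))"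
  proof (rule card_mono)
    show "finite (\<Union> (remove_edges N (\<Union>C) ` B))"
      using B fin by (auto simp: remove_edges_def)
    show "\<Union> (remove_edges N D ` B) \<subseteq> \<Union> (remove_edges N (\<Union>C) ` B)"
      using D by (auto simp: remove_edges_def)
  qed
  finally show "card B \<le> card (\<Union> (remove_edges N (\<Union>C) ` B))" .
qed

lemma hall_condition_fun_upd_violated:
  assumes hall: "hall_condition L M" and "x \<in> L"
    and "\<not> hall_condition L (M(x := Y))"
  obtains A where "A \<subseteq> L" "finite A" "x \<notin> A" "card (\<Union> (M ` A) \<union> Y) \<le> card A"
proof -
  obtain B where B: "B \<subseteq> L" "finite B" and small: "card (\<Union> ((M(x := Y)) ` B)) < card B"
    using assms(3) unfolding hall_condition_def by (auto simp: not_le)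
  have "x \<in> B"
  proof (rule ccontr)
    assume "x \<notin> B"
    then have "(M(x := Y)) ` B = M ` B" by auto
    then show False using small hall B unfolding hall_condition_def by (metis not_le)
  qed
  then have "\<Union> ((M(x := Y)) ` B) = \<Union> (M ` (B - {x})) \<union> Y" by auto
  moreover have "card B = Suc (card (B - {x}))"
    using card_Suc_Diff1[OF B(2) \<open>x \<in> B\<close>] by simp
  ultimately show thesis
    using that[of "B - {x}"] B small by auto
qed

text \<open>If removing \<open>b\<^sub>1\<close> and removing \<open>b\<^sub>2\<close> from \<open>M x\<close> both broke Hall's condition, the two
  violating sets together with \<open>x\<close> would break it for \<open>M\<close>, by submodularity of \<open>card\<close>.\<close>
lemma hall_condition_critical_singleton:
  assumes fin: "\<forall>x\<in>L. finite (M x)" and hall: "hall_condition L M"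
    and critical: "\<And>x b. x \<in> L \<Longrightarrow> b \<in> M x \<Longrightarrow> \<not> hall_condition L (M(x := M x - {b}))"
    and x: "x \<in> L"
  shows "\<exists>b. M x = {b}"
proof -
  have "card {x} \<le> card (\<Union> (M ` {x}))"
    using hall x unfolding hall_condition_def by blast
  then have "M x \<noteq> {}" by auto
  moreover have "b1 = b2" if b1: "b1 \<in> M x" and b2: "b2 \<in> M x" for b1 b2
  proof (rule ccontr)
    assume "b1 \<noteq> b2"
    obtain A1 where A1: "A1 \<subseteq> L" "finite A1" "x \<notin> A1"
      and c1: "card (\<Union> (M ` A1) \<union> (M x - {b1})) \<le> card A1"
      using hall_condition_fun_upd_violated[OF hall x critical[OF x b1]] .
    obtain A2 where A2: "A2 \<subseteq> L" "finite A2" "x \<notin> A2"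
      and c2: "card (\<Union> (M ` A2) \<union> (M x - {b2})) \<le> card A2"
      using hall_condition_fun_upd_violated[OF hall x critical[OF x b2]] .
    define X1 where "X1 = \<Union> (M ` A1) \<union> (M x - {b1})"
    define X2 where "X2 = \<Union> (M ` A2) \<union> (M x - {b2})"
    have fX: "finite X1" "finite X2" using A1 A2 fin x by (auto simp: X1_def X2_def)
    have "card (insert x (A1 \<union> A2)) \<le> card (\<Union> (M ` insert x (A1 \<union> A2)))"
      using A1 A2 x by (intro hall[unfolded hall_condition_def, rule_format]) auto
    also have "\<dots> \<le> card (X1 \<union> X2)"
      using \<open>b1 \<noteq> b2\<close> fX by (intro card_mono) (auto simp: X1_def X2_def)
    finally have union: "Suc (card (A1 \<union> A2)) \<le> card (X1 \<union> X2)"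
      using A1 A2 by simp
    have "card (A1 \<inter> A2) \<le> card (\<Union> (M ` (A1 \<inter> A2)))"
      using hall A1 unfolding hall_condition_def by blast
    also have "\<dots> \<le> card (X1 \<inter> X2)"
      using fX by (intro card_mono) (auto simp: X1_def X2_def)
    finally have inter: "card (A1 \<inter> A2) \<le> card (X1 \<inter> X2)" .
    show False
      using union inter c1 c2 card_Un_Int[OF A1(2) A2(2)] card_Un_Int[OF fX]
      unfolding X1_def[symmetric] X2_def[symmetric] by linarith
  qed
  ultimately show ?thesis by blast
qed

text \<open>By Zorn's lemma there is a maximal set of edges whose removal preserves Hall's condition;
  what remains is a matching.\<close>
theorem hall_marriage:
  assumes fin: "\<forall>x\<in>L. finite (N x)" and hall: "hall_condition L N"
  obtains f where "inj_on f L" "\<forall>x\<in>L. f x \<in> N x"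
proof -
  define \<A> where "\<A> = {D. hall_condition L (remove_edges N D)}"
  have "{} \<in> \<A>" using hall unfolding \<A>_def remove_edges_def by simp
  then obtain D where D: "D \<in> \<A>" and maximal: "\<forall>Z\<in>\<A>. D \<subseteq> Z \<longrightarrow> Z = D"
    using subset_Zorn_nonempty[of \<A>] hall_condition_remove_edges_Union_chain[OF fin]
    unfolding \<A>_def by blast
  define M where "M = remove_edges N D"
  have hallM: "hall_condition L M" using D unfolding \<A>_def M_def by simp
  have "\<not> hall_condition L (M(x := M x - {b}))" if "b \<in> M x" for x b
  proof
    assume "hall_condition L (M(x := M x - {b}))"
    moreover have "M(x := M x - {b}) = remove_edges N (insert (x, b) D)"
      by (auto simp: M_def remove_edges_def fun_eq_iff)
    ultimately have "insert (x, b) D \<in> \<A>" unfolding \<A>_def by simp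
    then have "insert (x, b) D = D" using maximal subset_insertI by blast
    then show False using that by (auto simp: M_def remove_edges_def)
  qed
  moreover have "\<forall>x\<in>L. finite (M x)" using fin by (simp add: M_def remove_edges_def)
  ultimately have single: "\<forall>x\<in>L. \<exists>b. M x = {b}"
    using hall_condition_critical_singleton[OF _ hallM] by blast
  define f where "f x = the_elem (M x)" for x
  have Mf: "M x = {f x}" if "x \<in> L" for x
    using single that unfolding f_def by fastforce
  have "inj_on f L"
  proof (rule inj_onI, rule ccontr)
    fix x y assume "x \<in> L" "y \<in> L" "f x = f y" "x \<noteq> y"
    then have "card {x, y} \<le> card (\<Union> (M ` {x, y}))"
      by (intro hallM[unfolded hall_condition_def, rule_format]) auto
    then show False using Mf \<open>x \<in> L\<close> \<open>y \<in> L\<close> \<open>f x = f y\<close> \<open>x \<noteq> y\<close> by simp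
  qed
  moreover have "\<forall>x\<in>L. f x \<in> N x" using Mf by (auto simp: M_def remove_edges_def)
  ultimately show thesis using that by blast
qed

section \<open>Invariant means and small doubling\<close>

definition left_invariant_mean :: "('a, 'b) monoid_scheme \<Rightarrow> ('a set \<Rightarrow> real) \<Rightarrow> bool" where
  "left_invariant_mean G \<mu> \<longleftrightarrow>
     (\<forall>A. A \<subseteq> carrier G \<longrightarrow> \<mu> A \<ge> 0) \<and>
     \<mu> (carrier G) = 1 \<and>
     (\<forall>A B. A \<subseteq> carrier G \<longrightarrow> B \<subseteq> carrier G \<longrightarrow> A \<inter> B = {} \<longrightarrow>
            \<mu> (A \<union> B) = \<mu> A + \<mu> B) \<and>
     (\<forall>g\<in>carrier G. \<forall>A. A \<subseteq> carrier G \<longrightarrow> \<mu> (g <#\<^bsub>G\<^esub> A) = \<mu> A)"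

lemma amenable_iff_left_invariant_mean: "amenable G \<longleftrightarrow> (\<exists>\<mu>. left_invariant_mean G \<mu>)"
  unfolding amenable_def left_invariant_mean_def ..

lemma left_invariant_mean_nonneg: "left_invariant_mean G \<mu> \<Longrightarrow> A \<subseteq> carrier G \<Longrightarrow> \<mu> A \<ge> 0"
  unfolding left_invariant_mean_def by blast

lemma left_invariant_mean_carrier: "left_invariant_mean G \<mu> \<Longrightarrow> \<mu> (carrier G) = 1"
  unfolding left_invariant_mean_def by blast

lemma left_invariant_mean_l_coset:
  "left_invariant_mean G \<mu> \<Longrightarrow> g \<in> carrier G \<Longrightarrow> A \<subseteq> carrier G \<Longrightarrow> \<mu> (g <#\<^bsub>G\<^esub> A) = \<mu> A"
  unfolding left_invariant_mean_def by blast

lemma left_invariant_mean_Un: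
  "left_invariant_mean G \<mu> \<Longrightarrow> A \<subseteq> carrier G \<Longrightarrow> B \<subseteq> carrier G \<Longrightarrow> A \<inter> B = {}
    \<Longrightarrow> \<mu> (A \<union> B) = \<mu> A + \<mu> B"
  unfolding left_invariant_mean_def by blast

lemma left_invariant_mean_UN:
  assumes \<mu>: "left_invariant_mean G \<mu>"
  shows "finite I \<Longrightarrow> (\<And>i. i \<in> I \<Longrightarrow> Y i \<subseteq> carrier G) \<Longrightarrow> disjoint_family_on Y I
    \<Longrightarrow> \<mu> (\<Union>i\<in>I. Y i) = (\<Sum>i\<in>I. \<mu> (Y i))"
proof (induction I rule: finite_induct)
  case empty
  show ?case using left_invariant_mean_Un[OF \<mu>, of "{}" "{}"] by simp
next
  case (insert i I)
  then have "\<mu> (Y i \<union> (\<Union>j\<in>I. Y j)) = \<mu> (Y i) + \<mu> (\<Union>j\<in>I. Y j)"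
    by (intro left_invariant_mean_Un[OF \<mu>]) (auto simp: disjoint_family_on_def)
  with insert show ?case by (simp add: disjoint_family_on_insert)
qed

text \<open>Partition the carrier according to the displacement \<open>k\<close> with \<open>\<phi> a = k \<otimes> a\<close>;
  then \<open>\<phi>\<close> maps each part onto its left translate by \<open>k\<close>.\<close>
lemma left_invariant_mean_image_bounded_displacement:
  assumes "group G" and \<mu>: "left_invariant_mean G \<mu>"
    and K: "finite K" "K \<subseteq> carrier G"
    and inj: "inj_on \<phi> (carrier G)" and displ: "\<And>a. a \<in> carrier G \<Longrightarrow> \<phi> a \<in> K <#>\<^bsub>G\<^esub> {a}"
  shows "\<mu> (\<phi> ` carrier G) = 1"
proof -
  interpret G: group G by fact
  define P where "P k = {a \<in> carrier G. \<phi> a = k \<otimes>\<^bsub>G\<^esub> a}" for k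
  have displ': "\<exists>k\<in>K. \<phi> a = k \<otimes>\<^bsub>G\<^esub> a" if "a \<in> carrier G" for a
    using displ[OF that] by (auto simp: set_mult_def)
  have P_carrier: "P k \<subseteq> carrier G" for k
    by (auto simp: P_def)
  have cover: "carrier G = (\<Union>k\<in>K. P k)"
    using displ' by (auto simp: P_def)
  have image: "\<phi> ` carrier G = (\<Union>k\<in>K. k <#\<^bsub>G\<^esub> P k)"
  proof (intro equalityI subsetI)
    fix y assume "y \<in> \<phi> ` carrier G"
    then obtain a k where "a \<in> carrier G" "k \<in> K" "y = \<phi> a" "\<phi> a = k \<otimes>\<^bsub>G\<^esub> a"
      using displ' by blast
    then show "y \<in> (\<Union>k\<in>K. k <#\<^bsub>G\<^esub> P k)" by (auto simp: P_def l_coset_def)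
  qed (auto simp: P_def l_coset_def; metis imageI)
  have P_disj: "disjoint_family_on P K"
    using K by (auto simp: disjoint_family_on_def P_def) (metis G.r_cancel subsetD)
  have "disjoint_family_on (\<lambda>k. k <#\<^bsub>G\<^esub> P k) K"
    using K inj by (auto simp: disjoint_family_on_def P_def l_coset_def) (metis G.r_cancel inj_onD subsetD)
  then have "\<mu> (\<phi> ` carrier G) = (\<Sum>k\<in>K. \<mu> (k <#\<^bsub>G\<^esub> P k))"
    unfolding image using K P_carrier by (intro left_invariant_mean_UN[OF \<mu>]) (auto simp: l_coset_def)
  also have "\<dots> = (\<Sum>k\<in>K. \<mu> (P k))"
    using K P_carrier by (intro sum.cong refl left_invariant_mean_l_coset[OF \<mu>]) auto
  also have "\<dots> = \<mu> (carrier G)"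
    by (subst cover, rule left_invariant_mean_UN[OF \<mu>, symmetric]) (use K P_disj P_carrier in auto)
  finally show ?thesis using left_invariant_mean_carrier[OF \<mu>] by simp
qed

lemma large_doubling_imp_double_injection:
  assumes K: "finite K"
    and doubling: "\<And>A. finite A \<Longrightarrow> A \<noteq> {} \<Longrightarrow> A \<subseteq> carrier G \<Longrightarrow> 2 * card A \<le> card (K <#>\<^bsub>G\<^esub> A)"
  obtains \<phi> where "inj_on \<phi> (carrier G \<times> (UNIV :: bool set))"
    "\<And>a i. a \<in> carrier G \<Longrightarrow> \<phi> (a, i) \<in> K <#>\<^bsub>G\<^esub> {a}"
proof -
  define N where "N x = K <#>\<^bsub>G\<^esub> {fst x}" for x :: "'a \<times> bool"
  have hall: "hall_condition (carrier G \<times> (UNIV :: bool set)) N"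
    unfolding hall_condition_def
  proof (intro allI impI)
    fix B assume B: "B \<subseteq> carrier G \<times> (UNIV :: bool set)" "finite B"
    show "card B \<le> card (\<Union> (N ` B))"
    proof (cases "B = {}")
      case False
      have "card B \<le> card (fst ` B \<times> (UNIV :: bool set))"
        using B(2) by (intro card_mono) (auto intro: rev_image_eqI)
      also have "\<dots> = 2 * card (fst ` B)" by (simp add: card_cartesian_product)
      also have "\<dots> \<le> card (K <#>\<^bsub>G\<^esub> fst ` B)" using B False by (intro doubling) auto
      also have "K <#>\<^bsub>G\<^esub> fst ` B = \<Union> (N ` B)" by (auto simp: N_def set_mult_def)
      finally show ?thesis .
    qed simp
  qed
  have fin: "\<forall>x\<in>carrier G \<times> UNIV. finite (N x)"
    using K by (auto simp: N_def set_mult_def)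
  obtain \<phi> where "inj_on \<phi> (carrier G \<times> UNIV)" "\<forall>x\<in>carrier G \<times> UNIV. \<phi> x \<in> N x"
    using hall_marriage[OF fin hall] by blast
  then show thesis using that by (simp add: N_def)
qed

text \<open>Were the doubling large for every finite set, the two halves of the resulting double
  injection would be disjoint sets of mean \<open>1\<close> each.\<close>
lemma left_invariant_mean_small_doubling:
  assumes "group G" and \<mu>: "left_invariant_mean G \<mu>"
    and K: "finite K" "K \<subseteq> carrier G"
  obtains A where "finite A" "A \<noteq> {}" "A \<subseteq> carrier G" "card (K <#>\<^bsub>G\<^esub> A) < 2 * card A"
proof -
  have "\<not> (\<forall>A. finite A \<longrightarrow> A \<noteq> {} \<longrightarrow> A \<subseteq> carrier G \<longrightarrow> 2 * card A \<le> card (K <#>\<^bsub>G\<^esub> A))"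
  proof
    assume "\<forall>A. finite A \<longrightarrow> A \<noteq> {} \<longrightarrow> A \<subseteq> carrier G \<longrightarrow> 2 * card A \<le> card (K <#>\<^bsub>G\<^esub> A)"
    then obtain \<phi> where inj: "inj_on \<phi> (carrier G \<times> (UNIV :: bool set))"
      and displ: "\<And>a i. a \<in> carrier G \<Longrightarrow> \<phi> (a, i) \<in> K <#>\<^bsub>G\<^esub> {a}"
      using large_doubling_imp_double_injection[OF K(1)] by blast
    define copy where "copy i = (\<lambda>a. \<phi> (a, i)) ` carrier G" for i
    have copy_mean: "\<mu> (copy i) = 1" for i
      unfolding copy_def using inj displ
      by (intro left_invariant_mean_image_bounded_displacement[OF \<open>group G\<close> \<mu> K]) (auto simp: inj_on_def)
    have "K <#>\<^bsub>G\<^esub> {a} \<subseteq> carrier G" if "a \<in> carrier G" for a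
      using K that by (intro monoid.set_mult_closed group.is_monoid \<open>group G\<close>) auto
    then have copy_carrier: "copy i \<subseteq> carrier G" for i
      using displ by (auto simp: copy_def)
    have disj: "copy True \<inter> copy False = {}"
      using inj unfolding copy_def inj_on_def by blast
    define rest where "rest = carrier G - (copy True \<union> copy False)"
    have cover: "carrier G = (copy True \<union> copy False) \<union> rest"
      using copy_carrier by (auto simp: rest_def)
    have "\<mu> (carrier G) = \<mu> ((copy True \<union> copy False) \<union> rest)"
      by (rule arg_cong[OF cover])
    also have "\<dots> = \<mu> (copy True \<union> copy False) + \<mu> rest"
      by (rule left_invariant_mean_Un[OF \<mu>]) (use copy_carrier in \<open>auto simp: rest_def\<close>)
    also have "\<mu> (copy True \<union> copy False) = 2"
      using left_invariant_mean_Un[OF \<mu> copy_carrier copy_carrier disj] copy_mean by simp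
    finally show False
      using left_invariant_mean_carrier[OF \<mu>] left_invariant_mean_nonneg[OF \<mu>, of rest]
      by (simp add: rest_def)
  qed
  then obtain A where "finite A" "A \<noteq> {}" "A \<subseteq> carrier G" "\<not> 2 * card A \<le> card (K <#>\<^bsub>G\<^esub> A)"
    by blast
  then show thesis using that[of A] by (simp add: not_le)
qed

lemma amenable_small_right_doubling:
  assumes "group G" and "amenable G"
    and K: "finite K" "K \<subseteq> carrier G"
  obtains A where "finite A" "A \<noteq> {}" "A \<subseteq> carrier G" "card (A <#>\<^bsub>G\<^esub> K) < 2 * card A"
proof -
  interpret G: group G by fact
  obtain \<mu> where \<mu>: "left_invariant_mean G \<mu>"
    using \<open>amenable G\<close> amenable_iff_left_invariant_mean by blast
  have inv_K: "finite (m_inv G ` K)" "m_inv G ` K \<subseteq> carrier G" using K by auto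
  obtain B where B: "finite B" "B \<noteq> {}" "B \<subseteq> carrier G"
    and small: "card (m_inv G ` K <#>\<^bsub>G\<^esub> B) < 2 * card B"
    using left_invariant_mean_small_doubling[OF \<open>group G\<close> \<mu> inv_K] by blast
  have inv_inv_mult: "inv\<^bsub>G\<^esub> (inv\<^bsub>G\<^esub> k \<otimes>\<^bsub>G\<^esub> b) = inv\<^bsub>G\<^esub> b \<otimes>\<^bsub>G\<^esub> k" if "k \<in> K" "b \<in> B" for k b
  proof -
    have "k \<in> carrier G" "b \<in> carrier G" using that K B by auto
    then show ?thesis by (simp add: G.inv_mult_group)
  qed
  have "m_inv G ` B <#>\<^bsub>G\<^esub> K = m_inv G ` (m_inv G ` K <#>\<^bsub>G\<^esub> B)"
    unfolding set_mult_def using inv_inv_mult by (auto simp: image_UN)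
  moreover have "card (m_inv G ` (m_inv G ` K <#>\<^bsub>G\<^esub> B)) \<le> card (m_inv G ` K <#>\<^bsub>G\<^esub> B)"
    by (rule card_image_le) (use B K in \<open>simp add: set_mult_def\<close>)
  moreover have "card (m_inv G ` B) = card B"
    using B by (intro card_image inj_on_subset[OF G.inv_inj]) auto
  ultimately have "card (m_inv G ` B <#>\<^bsub>G\<^esub> K) < 2 * card (m_inv G ` B)"
    using small by (metis le_less_trans)
  moreover have "finite (m_inv G ` B)" "m_inv G ` B \<noteq> {}" "m_inv G ` B \<subseteq> carrier G"
    using B by auto
  ultimately show thesis using that by blast
qed

section \<open>Walks in Cayley and Schreier graphs\<close>

lemma is_walk_singleton [simp]: "is_walk V E [x] \<longleftrightarrow> x \<in> V"
  by (simp add: is_walk_def)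

lemma is_walk_Cons_Cons [simp]:
  "is_walk V E (x # y # ps) \<longleftrightarrow> x \<in> V \<and> E x y \<and> is_walk V E (y # ps)"
  by (auto simp: is_walk_def)

lemma is_walk_map:
  assumes "is_walk V E ps" and "\<And>x. x \<in> V \<Longrightarrow> f x \<in> V'" and "\<And>x y. E x y \<Longrightarrow> E' (f x) (f y)"
  shows "is_walk V' E' (map f ps)"
  using assms unfolding is_walk_def by (auto simp: successively_map elim: successively_mono)

text \<open>Cutting out the closed sub-walk between two visits of the same vertex.\<close>
lemma walk_imp_path:
  "is_walk V E ps \<Longrightarrow> \<exists>qs. is_path V E qs \<and> hd qs = hd ps \<and> last qs = last ps
     \<and> set qs \<subseteq> set ps \<and> length qs \<le> length ps"
proof (induction "length ps" arbitrary: ps rule: less_induct)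
  case less
  show ?case
  proof (cases "distinct ps")
    case True
    then show ?thesis using less.prems unfolding is_path_def by blast
  next
    case False
    then obtain xs ys zs y where ps: "ps = xs @ [y] @ ys @ [y] @ zs"
      using not_distinct_decomp by blast
    define ps' where "ps' = xs @ [y] @ zs"
    have "successively E ((xs @ [y]) @ (ys @ [y] @ zs))" and "successively E ((xs @ [y] @ ys) @ ([y] @ zs))"
      using less.prems unfolding is_walk_def ps by simp_all
    then have "successively E (xs @ [y])" and "successively E ([y] @ zs)"
      by (auto simp only: successively_append_iff)
    then have "successively E ps'"
      unfolding ps'_def by (cases zs) (auto simp: successively_append_iff)
    then have "is_walk V E ps'" using less.prems unfolding is_walk_def ps'_def ps by auto
    moreover have "length ps' < length ps" unfolding ps'_def ps by simp
    ultimately obtain qs where "is_path V E qs" "hd qs = hd ps'" "last qs = last ps'"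
      "set qs \<subseteq> set ps'" "length qs \<le> length ps'"
      using less.hyps by blast
    moreover have "hd ps' = hd ps" "last ps' = last ps" "set ps' \<subseteq> set ps" "length ps' \<le> length ps"
      unfolding ps'_def ps by (cases xs; cases zs; auto)+
    ultimately show ?thesis by (metis order.trans)
  qed
qed

primrec word_ball :: "('a, 'b) monoid_scheme \<Rightarrow> 'a set \<Rightarrow> nat \<Rightarrow> 'a set" where
  "word_ball G S 0 = {\<one>\<^bsub>G\<^esub>}"
| "word_ball G S (Suc n) = word_ball G S n \<union> (S <#>\<^bsub>G\<^esub> word_ball G S n)"

lemma finite_word_ball: "finite S \<Longrightarrow> finite (word_ball G S n)"
  by (induction n) (auto simp: set_mult_def)

lemma word_ball_mono: "n \<le> n' \<Longrightarrow> word_ball G S n \<subseteq> word_ball G S n'"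
  by (rule lift_Suc_mono_le[where f = "word_ball G S"]) auto

lemma word_ball_carrier:
  assumes "monoid G" "S \<subseteq> carrier G"
  shows "word_ball G S n \<subseteq> carrier G"
proof (induction n)
  case (Suc n)
  then show ?case using monoid.set_mult_closed[OF assms(1,2) Suc] by simp
qed (simp add: monoid.one_closed[OF assms(1)])

lemma cayley_walk_subset_word_ball:
  assumes "monoid G" and S: "S \<subseteq> carrier G"
  shows "is_walk (carrier G) (cayley_adj G S) ps
    \<Longrightarrow> set ps \<subseteq> hd ps <#\<^bsub>G\<^esub> word_ball G S (length ps - 1)"
proof (induction ps rule: induct_list012)
  case (2 x)
  then show ?case by (simp add: l_coset_def monoid.r_one[OF \<open>monoid G\<close>])
next
  case (3 x y zs)
  interpret G: monoid G by fact
  obtain s where s: "s \<in> S" "y = x \<otimes>\<^bsub>G\<^esub> s" and x: "x \<in> carrier G"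
    using "3.prems" by (auto simp: cayley_adj_def)
  define n where "n = length zs"
  have ball: "word_ball G S n \<subseteq> carrier G" "S \<subseteq> carrier G"
    using word_ball_carrier[OF \<open>monoid G\<close> S] S by auto
  have "\<one>\<^bsub>G\<^esub> \<in> word_ball G S (Suc n)"
    using word_ball_mono[of 0 "Suc n" G S] by simp
  then have "x \<in> x <#\<^bsub>G\<^esub> word_ball G S (Suc n)"
    using x unfolding l_coset_def by (auto intro!: bexI[of _ "\<one>\<^bsub>G\<^esub>"])
  moreover have "y <#\<^bsub>G\<^esub> word_ball G S n \<subseteq> x <#\<^bsub>G\<^esub> word_ball G S (Suc n)"
  proof
    fix w assume "w \<in> y <#\<^bsub>G\<^esub> word_ball G S n"
    then obtain b where b: "b \<in> word_ball G S n" "w = x \<otimes>\<^bsub>G\<^esub> s \<otimes>\<^bsub>G\<^esub> b"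
      using s by (auto simp: l_coset_def)
    moreover have "s \<in> carrier G" "b \<in> carrier G" using ball s b by auto
    ultimately have "w = x \<otimes>\<^bsub>G\<^esub> (s \<otimes>\<^bsub>G\<^esub> b)" "s \<otimes>\<^bsub>G\<^esub> b \<in> word_ball G S (Suc n)"
      using s x by (auto simp: G.m_assoc set_mult_def)
    then show "w \<in> x <#\<^bsub>G\<^esub> word_ball G S (Suc n)" by (auto simp: l_coset_def)
  qed
  ultimately show ?case
    using "3.IH"(2) "3.prems" by (auto simp: n_def)
qed simp

lemma cayley_adj_mult_left:
  assumes "monoid G" "S \<subseteq> carrier G" "a \<in> carrier G" and "cayley_adj G S x y"
  shows "cayley_adj G S (a \<otimes>\<^bsub>G\<^esub> x) (a \<otimes>\<^bsub>G\<^esub> y)"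
proof -
  obtain s where "s \<in> S" "y = x \<otimes>\<^bsub>G\<^esub> s" "x \<in> carrier G" "y \<in> carrier G"
    using assms(4) by (auto simp: cayley_adj_def)
  moreover have "s \<in> carrier G" using \<open>s \<in> S\<close> assms(2) by blast
  ultimately show ?thesis
    using assms(1,3) unfolding cayley_adj_def
    by (intro conjI bexI[of _ s]) (auto simp: monoid.m_assoc monoid.m_closed)
qed

lemma graph_dist_le_cayley_mult_left:
  assumes "monoid G" "S \<subseteq> carrier G" "a \<in> carrier G"
    and "graph_dist_le (carrier G) (cayley_adj G S) x y k"
  shows "graph_dist_le (carrier G) (cayley_adj G S) (a \<otimes>\<^bsub>G\<^esub> x) (a \<otimes>\<^bsub>G\<^esub> y) k"
proof -
  obtain ps where ps: "is_walk (carrier G) (cayley_adj G S) ps" "hd ps = x" "last ps = y"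
    "length ps - 1 \<le> k"
    using assms(4) unfolding graph_dist_le_def by blast
  have "is_walk (carrier G) (cayley_adj G S) (map ((\<otimes>\<^bsub>G\<^esub>) a) ps)"
    using ps(1) by (rule is_walk_map) (use assms(1-3) in \<open>auto intro: cayley_adj_mult_left monoid.m_closed\<close>)
  moreover have "ps \<noteq> []" using ps(1) by (simp add: is_walk_def)
  ultimately show ?thesis
    unfolding graph_dist_le_def using ps by (intro exI[of _ "map ((\<otimes>\<^bsub>G\<^esub>) a) ps"]) (simp add: hd_map last_map)
qed

lemma rcoset_eq_if_mem_rcosets:
  assumes "group G" "subgroup H G" "C \<in> rcosets\<^bsub>G\<^esub> H" "x \<in> C"
  shows "x \<in> carrier G" and "H #>\<^bsub>G\<^esub> x = C"
proof -
  obtain g where g: "g \<in> carrier G" "C = H #>\<^bsub>G\<^esub> g"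
    using assms(3) unfolding RCOSETS_def by blast
  show "x \<in> carrier G"
    using subgroup.rcosets_carrier[OF assms(2,1,3)] assms(4) by blast
  show "H #>\<^bsub>G\<^esub> x = C"
    using group.repr_independence[OF assms(1)] assms(2,4) g by simp
qed

lemma rcoset_mult_left:
  assumes "group G" "subgroup H G" "h \<in> H" "x \<in> carrier G"
  shows "H #>\<^bsub>G\<^esub> (h \<otimes>\<^bsub>G\<^esub> x) = H #>\<^bsub>G\<^esub> x"
  using assms group.repr_independence[OF assms(1)] group.rcosI[OF assms(1)] subgroup.subset
  by metis

lemma rcoset_eq_imp_mult_inv_mem:
  assumes "group G" "subgroup H G" "x \<in> carrier G" "y \<in> carrier G" "H #>\<^bsub>G\<^esub> x = H #>\<^bsub>G\<^esub> y"
  shows "x \<otimes>\<^bsub>G\<^esub> inv\<^bsub>G\<^esub> y \<in> H"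
  using group.rcos_self[OF assms(1,3,2)] assms(5) subgroup.rcos_module_imp[OF assms(2,1,4)] by simp

lemma cayley_adj_imp_schreier_adj:
  assumes "group G" "subgroup H G" "S \<subseteq> carrier G" and "cayley_adj G S x y"
  shows "schreier_adj G H S (H #>\<^bsub>G\<^esub> x) (H #>\<^bsub>G\<^esub> y)"
proof -
  interpret G: group G by fact
  have H: "H \<subseteq> carrier G" using assms(2) by (rule subgroup.subset)
  obtain s where s: "s \<in> S" "y = x \<otimes>\<^bsub>G\<^esub> s" and xy: "x \<in> carrier G" "y \<in> carrier G"
    using assms(4) by (auto simp: cayley_adj_def)
  have "H #>\<^bsub>G\<^esub> y = (H #>\<^bsub>G\<^esub> x) #>\<^bsub>G\<^esub> s"
    using s assms(3) xy H by (auto simp: G.coset_mult_assoc)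
  moreover have "H #>\<^bsub>G\<^esub> x \<in> rcosets\<^bsub>G\<^esub> H" "H #>\<^bsub>G\<^esub> y \<in> rcosets\<^bsub>G\<^esub> H"
    using G.rcosetsI[OF H] xy by auto
  ultimately show ?thesis
    unfolding schreier_adj_def using s(1) by blast
qed

lemma cayley_walk_imp_schreier_walk:
  assumes "group G" "subgroup H G" "S \<subseteq> carrier G"
    and "is_walk (carrier G) (cayley_adj G S) ps"
  shows "is_walk (rcosets\<^bsub>G\<^esub> H) (schreier_adj G H S) (map (\<lambda>x. H #>\<^bsub>G\<^esub> x) ps)"
  using assms(4) by (rule is_walk_map)
    (use assms(1-3) in \<open>auto intro: group.rcosetsI[OF assms(1) subgroup.subset[OF assms(2)]]
      cayley_adj_imp_schreier_adj\<close>)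

lemma schreier_walk_lift:
  assumes "group G" "subgroup H G" "S \<subseteq> carrier G"
  shows "is_walk (rcosets\<^bsub>G\<^esub> H) (schreier_adj G H S) qs \<Longrightarrow> x \<in> hd qs \<Longrightarrow>
    \<exists>ps. is_walk (carrier G) (cayley_adj G S) ps \<and> hd ps = x \<and> map (\<lambda>y. H #>\<^bsub>G\<^esub> y) ps = qs"
proof (induction qs arbitrary: x rule: induct_list012)
  case (2 C)
  then show ?case
    using rcoset_eq_if_mem_rcosets[OF assms(1,2)] by (intro exI[of _ "[x]"]) auto
next
  case (3 C C' qs)
  then have C: "C \<in> rcosets\<^bsub>G\<^esub> H" "x \<in> C" and walk: "is_walk (rcosets\<^bsub>G\<^esub> H) (schreier_adj G H S) (C' # qs)"
    by auto
  obtain s where s: "s \<in> S" "C' = C #>\<^bsub>G\<^esub> s"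
    using "3.prems"(1) by (auto simp: schreier_adj_def)
  have "x \<otimes>\<^bsub>G\<^esub> s \<in> C'" using s C(2) by (auto simp: r_coset_def)
  then obtain ps where ps: "is_walk (carrier G) (cayley_adj G S) ps" "hd ps = x \<otimes>\<^bsub>G\<^esub> s"
    "map (\<lambda>y. H #>\<^bsub>G\<^esub> y) ps = C' # qs"
    using "3.IH"(2)[OF walk, of "x \<otimes>\<^bsub>G\<^esub> s"] by auto
  have x: "x \<in> carrier G" "H #>\<^bsub>G\<^esub> x = C"
    using rcoset_eq_if_mem_rcosets[OF assms(1,2) C] by auto
  have "x \<otimes>\<^bsub>G\<^esub> s \<in> carrier G"
    using x s assms(3) by (auto intro: group.is_monoid[OF assms(1), THEN monoid.m_closed])
  moreover have "ps \<noteq> []" using ps(3) by auto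
  ultimately have "is_walk (carrier G) (cayley_adj G S) (x # ps)"
    using ps x s by (cases ps) (auto simp: cayley_adj_def)
  then show ?case using ps x by (intro exI[of _ "x # ps"]) auto
qed (simp add: is_walk_def)

lemma inj_on_mult_rcoset_reps:
  assumes "group G" "subgroup H G" "A \<subseteq> H"
    and reps: "\<And>u. u \<in> U \<Longrightarrow> x u \<in> carrier G" and inj: "inj_on (\<lambda>u. H #>\<^bsub>G\<^esub> x u) U"
  shows "inj_on (\<lambda>(a, u). a \<otimes>\<^bsub>G\<^esub> x u) (A \<times> U)"
proof (rule inj_onI, clarify)
  interpret G: group G by fact
  fix a u a' u'
  assume au: "a \<in> A" "u \<in> U" "a' \<in> A" "u' \<in> U" and eq: "a \<otimes>\<^bsub>G\<^esub> x u = a' \<otimes>\<^bsub>G\<^esub> x u'"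
  have "H #>\<^bsub>G\<^esub> x u = H #>\<^bsub>G\<^esub> x u'"
    using rcoset_mult_left[OF assms(1,2)] au eq reps assms(3) by (metis subsetD)
  then have "u = u'" using inj au by (auto dest: inj_onD)
  moreover have "a \<in> carrier G" "a' \<in> carrier G"
    using au assms(3) subgroup.subset[OF assms(2)] by auto
  ultimately show "a = a' \<and> u = u'"
    using eq reps au G.r_cancel by metis
qed

lemma translates_lie_over:
  assumes "group G" "subgroup H G" "B \<subseteq> H"
    and "\<And>i. i \<in> I \<Longrightarrow> x i \<in> carrier G \<and> H #>\<^bsub>G\<^esub> x i \<in> V"
    and "y \<in> (\<lambda>(a, i). a \<otimes>\<^bsub>G\<^esub> x i) ` (B \<times> I)"
  shows "y \<in> carrier G \<and> H #>\<^bsub>G\<^esub> y \<in> V"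
proof -
  obtain a i where "a \<in> B" "i \<in> I" "y = a \<otimes>\<^bsub>G\<^esub> x i" using assms(5) by auto
  moreover have "a \<in> carrier G" using \<open>a \<in> B\<close> assms(3) subgroup.subset[OF assms(2)] by auto
  ultimately show ?thesis
    using assms(3,4) rcoset_mult_left[OF assms(1,2)] group.is_monoid[OF assms(1), THEN monoid.m_closed]
    by auto
qed

section \<open>Lifting UFOs from the Schreier graph to the Cayley graph\<close>

lemma short_cayley_walk_visits_F:
  assumes "group G" "subgroup H G" "S \<subseteq> carrier G"
    and blocks: "\<forall>qs. is_path (rcosets\<^bsub>G\<^esub> H) (schreier_adj G H S) qs \<and> hd qs \<in> U \<and> last qs \<in> Ob
      \<longrightarrow> set qs \<inter> F \<noteq> {} \<or> r \<le> length qs - 1"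
    and walk: "is_walk (carrier G) (cayley_adj G S) ps" "H #>\<^bsub>G\<^esub> hd ps \<in> U" "H #>\<^bsub>G\<^esub> last ps \<in> Ob"
      "length ps - 1 < r"
  obtains z where "z \<in> word_ball G S r" "hd ps \<otimes>\<^bsub>G\<^esub> z \<in> set ps" "H #>\<^bsub>G\<^esub> (hd ps \<otimes>\<^bsub>G\<^esub> z) \<in> F"
proof -
  let ?proj = "map (\<lambda>x. H #>\<^bsub>G\<^esub> x) ps"
  have "is_walk (rcosets\<^bsub>G\<^esub> H) (schreier_adj G H S) ?proj"
    using cayley_walk_imp_schreier_walk[OF assms(1-3) walk(1)] .
  then obtain qs where qs: "is_path (rcosets\<^bsub>G\<^esub> H) (schreier_adj G H S) qs" "hd qs = hd ?proj"
    "last qs = last ?proj" "set qs \<subseteq> set ?proj" "length qs \<le> length ?proj"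
    using walk_imp_path by blast
  have "ps \<noteq> []" using walk(1) by (simp add: is_walk_def)
  then have "hd qs \<in> U" "last qs \<in> Ob" using qs(2,3) walk(2,3) by (simp_all add: hd_map last_map)
  moreover have "length qs - 1 < r" using qs(5) walk(4) by simp
  ultimately have "set qs \<inter> F \<noteq> {}" using blocks qs(1) by auto
  then obtain y where y: "y \<in> set ps" "H #>\<^bsub>G\<^esub> y \<in> F" using qs(4) by auto
  moreover obtain z where "z \<in> word_ball G S (length ps - 1)" "y = hd ps \<otimes>\<^bsub>G\<^esub> z"
    using cayley_walk_subset_word_ball[OF group.is_monoid[OF assms(1)] assms(3) walk(1)] y(1)
    by (auto simp: l_coset_def)
  moreover have "word_ball G S (length ps - 1) \<subseteq> word_ball G S r"
    using walk(4) by (intro word_ball_mono) simp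
  ultimately show thesis using that by blast
qed

text \<open>A vertex \<open>a \<otimes> rep u \<otimes> z\<close> of such a walk lying over \<open>f \<in> F\<close> equals \<open>(a \<otimes> \<kappa>) \<otimes> rep f\<close>
  with \<open>\<kappa> = rep u \<otimes> z \<otimes> inv (rep f) \<in> H\<close>; this is why \<open>K\<close> has to contain these \<open>\<kappa>\<close>.\<close>
lemma lifted_fence_meets_short_walks:
  assumes grp: "group G" and sub: "subgroup H G" and S: "S \<subseteq> carrier G"
    and blocks: "\<forall>qs. is_path (rcosets\<^bsub>G\<^esub> H) (schreier_adj G H S) qs \<and> hd qs \<in> U \<and> last qs \<in> Ob
      \<longrightarrow> set qs \<inter> F \<noteq> {} \<or> r \<le> length qs - 1"
    and UF: "U \<subseteq> rcosets\<^bsub>G\<^esub> H" "F \<subseteq> rcosets\<^bsub>G\<^esub> H"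
    and rep: "\<And>C. C \<in> rcosets\<^bsub>G\<^esub> H \<Longrightarrow> rep C \<in> C"
    and fence: "\<And>u z f. u \<in> U \<Longrightarrow> z \<in> word_ball G S r \<Longrightarrow> f \<in> F
      \<Longrightarrow> rep u \<otimes>\<^bsub>G\<^esub> z \<otimes>\<^bsub>G\<^esub> inv\<^bsub>G\<^esub> (rep f) \<in> H \<Longrightarrow> rep u \<otimes>\<^bsub>G\<^esub> z \<otimes>\<^bsub>G\<^esub> inv\<^bsub>G\<^esub> (rep f) \<in> K"
    and "A \<subseteq> H"
    and walk: "is_walk (carrier G) (cayley_adj G S) ps" "hd ps \<in> (\<lambda>(a, u). a \<otimes>\<^bsub>G\<^esub> rep u) ` (A \<times> U)"
      "H #>\<^bsub>G\<^esub> last ps \<in> Ob" "length ps - 1 < r"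
  shows "set ps \<inter> (\<lambda>(y, f). y \<otimes>\<^bsub>G\<^esub> rep f) ` ((A <#>\<^bsub>G\<^esub> K) \<times> F) \<noteq> {}"
proof -
  interpret G: group G by fact
  obtain a u where a: "a \<in> A" and u: "u \<in> U" and hd: "hd ps = a \<otimes>\<^bsub>G\<^esub> rep u"
    using walk(2) by auto
  have aH: "a \<in> H" and aG: "a \<in> carrier G" using a \<open>A \<subseteq> H\<close> subgroup.subset[OF sub] by auto
  have uG: "rep u \<in> carrier G" and "H #>\<^bsub>G\<^esub> rep u = u"
    using rcoset_eq_if_mem_rcosets[OF grp sub _ rep] u UF by auto
  then have "H #>\<^bsub>G\<^esub> hd ps \<in> U" using rcoset_mult_left[OF grp sub aH uG] hd u by simp
  then obtain z where z: "z \<in> word_ball G S r" "hd ps \<otimes>\<^bsub>G\<^esub> z \<in> set ps"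
      and f: "H #>\<^bsub>G\<^esub> (hd ps \<otimes>\<^bsub>G\<^esub> z) \<in> F"
    using short_cayley_walk_visits_F[OF grp sub S blocks walk(1) _ walk(3,4)] by blast
  define f where "f = H #>\<^bsub>G\<^esub> (hd ps \<otimes>\<^bsub>G\<^esub> z)"
  define w where "w = rep u \<otimes>\<^bsub>G\<^esub> z"
  have zG: "z \<in> carrier G" using z(1) word_ball_carrier[OF G.is_monoid S] by blast
  then have wG: "w \<in> carrier G" using uG by (simp add: w_def)
  have hd_z: "hd ps \<otimes>\<^bsub>G\<^esub> z = a \<otimes>\<^bsub>G\<^esub> w"
    using hd zG aG uG by (simp add: w_def G.m_assoc)
  have fG: "rep f \<in> carrier G" and "H #>\<^bsub>G\<^esub> rep f = f"
    using rcoset_eq_if_mem_rcosets[OF grp sub _ rep] f UF unfolding f_def by auto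
  moreover have "H #>\<^bsub>G\<^esub> w = f"
    using rcoset_mult_left[OF grp sub aH wG] hd_z unfolding f_def by simp
  ultimately have "w \<otimes>\<^bsub>G\<^esub> inv\<^bsub>G\<^esub> (rep f) \<in> H"
    using rcoset_eq_imp_mult_inv_mem[OF grp sub wG fG] by simp
  then have "a \<otimes>\<^bsub>G\<^esub> (w \<otimes>\<^bsub>G\<^esub> inv\<^bsub>G\<^esub> (rep f)) \<in> A <#>\<^bsub>G\<^esub> K"
    using fence[OF u z(1)] f a unfolding w_def f_def set_mult_def by blast
  moreover have "hd ps \<otimes>\<^bsub>G\<^esub> z = a \<otimes>\<^bsub>G\<^esub> (w \<otimes>\<^bsub>G\<^esub> inv\<^bsub>G\<^esub> (rep f)) \<otimes>\<^bsub>G\<^esub> rep f"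
    using hd_z aG wG fG by (simp add: G.m_assoc)
  ultimately have "hd ps \<otimes>\<^bsub>G\<^esub> z \<in> (\<lambda>(y, f). y \<otimes>\<^bsub>G\<^esub> rep f) ` ((A <#>\<^bsub>G\<^esub> K) \<times> F)"
    using f unfolding f_def by (auto intro: rev_image_eqI)
  then show ?thesis using z(2) by blast
qed

lemma bij_betw_images_of_inj:
  assumes "inj_on \<phi> I" "inj_on \<psi> I"
  obtains \<beta> where "bij_betw \<beta> (\<phi> ` I) (\<psi> ` I)" "\<And>x. x \<in> I \<Longrightarrow> \<beta> (\<phi> x) = \<psi> x"
proof
  show "bij_betw (\<psi> \<circ> inv_into I \<phi>) (\<phi> ` I) (\<psi> ` I)"
    using bij_betw_trans[OF bij_betw_inv_into[OF inj_on_imp_bij_betw[OF assms(1)]]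
        inj_on_imp_bij_betw[OF assms(2)]] .
  show "(\<psi> \<circ> inv_into I \<phi>) (\<phi> x) = \<psi> x" if "x \<in> I" for x
    using assms(1) that by simp
qed

lemma translates_matching:
  assumes "monoid G" "S \<subseteq> carrier G" "B \<subseteq> carrier G"
    and inj: "inj_on (\<lambda>(a, i). a \<otimes>\<^bsub>G\<^esub> x i) (B \<times> I)" "inj_on (\<lambda>(a, i). a \<otimes>\<^bsub>G\<^esub> y i) (B \<times> I)"
    and dist: "\<And>i. i \<in> I \<Longrightarrow> graph_dist_le (carrier G) (cayley_adj G S) (x i) (y i) k"
  obtains \<beta> where "bij_betw \<beta> ((\<lambda>(a, i). a \<otimes>\<^bsub>G\<^esub> x i) ` (B \<times> I)) ((\<lambda>(a, i). a \<otimes>\<^bsub>G\<^esub> y i) ` (B \<times> I))"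
    "\<forall>v\<in>(\<lambda>(a, i). a \<otimes>\<^bsub>G\<^esub> x i) ` (B \<times> I). graph_dist_le (carrier G) (cayley_adj G S) v (\<beta> v) k"
proof -
  obtain \<beta> where \<beta>: "bij_betw \<beta> ((\<lambda>(a, i). a \<otimes>\<^bsub>G\<^esub> x i) ` (B \<times> I)) ((\<lambda>(a, i). a \<otimes>\<^bsub>G\<^esub> y i) ` (B \<times> I))"
    and \<beta>_eq: "\<And>p. p \<in> B \<times> I \<Longrightarrow> \<beta> ((\<lambda>(a, i). a \<otimes>\<^bsub>G\<^esub> x i) p) = (\<lambda>(a, i). a \<otimes>\<^bsub>G\<^esub> y i) p"
    using bij_betw_images_of_inj[OF inj] by blast
  have "graph_dist_le (carrier G) (cayley_adj G S) v (\<beta> v) k"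
    if v: "v \<in> (\<lambda>(a, i). a \<otimes>\<^bsub>G\<^esub> x i) ` (B \<times> I)" for v
  proof -
    obtain a i where ai: "a \<in> B" "i \<in> I" "v = a \<otimes>\<^bsub>G\<^esub> x i" using v by auto
    then have "\<beta> v = a \<otimes>\<^bsub>G\<^esub> y i" using \<beta>_eq[of "(a, i)"] by simp
    then show ?thesis
      using graph_dist_le_cayley_mult_left[OF assms(1,2) _ dist[OF ai(2)]] ai assms(3) by auto
  qed
  then show thesis using that \<beta> by blast
qed

lemma cayley_UFO_from_schreier_UFO:
  assumes grp: "group G" and sub: "subgroup H G" and S: "S \<subseteq> carrier G"
    and UFO: "is_UFO (rcosets\<^bsub>G\<^esub> H) (schreier_adj G H S) (2 * m) k r U F Ob"
    and rep: "\<And>C. C \<in> rcosets\<^bsub>G\<^esub> H \<Longrightarrow> rep C \<in> C"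
    and target: "\<And>u. u \<in> U \<Longrightarrow> t u \<in> carrier G \<and> H #>\<^bsub>G\<^esub> t u \<in> Ob
      \<and> graph_dist_le (carrier G) (cayley_adj G S) (rep u) (t u) k"
    and inj_target: "inj_on (\<lambda>u. H #>\<^bsub>G\<^esub> t u) U"
    and K: "finite K" "K \<subseteq> H"
    and fence: "\<And>u z f. u \<in> U \<Longrightarrow> z \<in> word_ball G S r \<Longrightarrow> f \<in> F
      \<Longrightarrow> rep u \<otimes>\<^bsub>G\<^esub> z \<otimes>\<^bsub>G\<^esub> inv\<^bsub>G\<^esub> (rep f) \<in> H \<Longrightarrow> rep u \<otimes>\<^bsub>G\<^esub> z \<otimes>\<^bsub>G\<^esub> inv\<^bsub>G\<^esub> (rep f) \<in> K"
    and A: "finite A" "A \<noteq> {}" "A \<subseteq> H" "card (A <#>\<^bsub>G\<^esub> K) < 2 * card A"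
  shows "is_UFO (carrier G) (cayley_adj G S) m k r
    ((\<lambda>(a, u). a \<otimes>\<^bsub>G\<^esub> rep u) ` (A \<times> U)) ((\<lambda>(y, f). y \<otimes>\<^bsub>G\<^esub> rep f) ` ((A <#>\<^bsub>G\<^esub> K) \<times> F))
    ((\<lambda>(a, u). a \<otimes>\<^bsub>G\<^esub> t u) ` (A \<times> U))"
    (is "is_UFO _ _ _ _ _ ?U ?F ?O")
proof -
  interpret G: group G by fact
  have H: "H \<subseteq> carrier G" using sub by (rule subgroup.subset)
  have UR: "U \<subseteq> rcosets\<^bsub>G\<^esub> H" and FR: "F \<subseteq> rcosets\<^bsub>G\<^esub> H"
    and fin: "finite U" "finite F" and disj: "U \<inter> F = {}" "U \<inter> Ob = {}" "F \<inter> Ob = {}"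
    and "U \<noteq> {}" and card_U: "2 * m * card F \<le> card U"
    and blocks: "\<forall>qs. is_path (rcosets\<^bsub>G\<^esub> H) (schreier_adj G H S) qs \<and> hd qs \<in> U \<and> last qs \<in> Ob
      \<longrightarrow> set qs \<inter> F \<noteq> {} \<or> r \<le> length qs - 1"
    using UFO unfolding is_UFO_def by auto
  have rep_coset: "rep C \<in> carrier G \<and> H #>\<^bsub>G\<^esub> rep C = C" if "C \<in> rcosets\<^bsub>G\<^esub> H" for C
    using rcoset_eq_if_mem_rcosets[OF grp sub that rep[OF that]] by auto
  have AK: "A <#>\<^bsub>G\<^esub> K \<subseteq> H"
    using A(3) K(2) subgroup.m_closed[OF sub] unfolding set_mult_def by blast
  have over_U: "y \<in> carrier G \<and> H #>\<^bsub>G\<^esub> y \<in> U" if "y \<in> ?U" for y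
    by (rule translates_lie_over[OF grp sub A(3) _ that]) (use rep_coset UR in auto)
  have over_F: "y \<in> carrier G \<and> H #>\<^bsub>G\<^esub> y \<in> F" if "y \<in> ?F" for y
    by (rule translates_lie_over[OF grp sub AK _ that]) (use rep_coset FR in auto)
  have over_O: "y \<in> carrier G \<and> H #>\<^bsub>G\<^esub> y \<in> Ob" if "y \<in> ?O" for y
    by (rule translates_lie_over[OF grp sub A(3) _ that]) (use target in auto)
  have "inj_on (\<lambda>u. H #>\<^bsub>G\<^esub> rep u) U"
    using UR rep_coset by (intro inj_onI) (metis subsetD)
  then have inj_U: "inj_on (\<lambda>(a, u). a \<otimes>\<^bsub>G\<^esub> rep u) (A \<times> U)"
    using UR rep_coset by (intro inj_on_mult_rcoset_reps[OF grp sub A(3)]) auto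
  have inj_O: "inj_on (\<lambda>(a, u). a \<otimes>\<^bsub>G\<^esub> t u) (A \<times> U)"
    using target inj_target by (intro inj_on_mult_rcoset_reps[OF grp sub A(3)]) auto
  obtain \<beta> where \<beta>: "bij_betw \<beta> ?U ?O"
    and dist: "\<forall>y\<in>?U. graph_dist_le (carrier G) (cayley_adj G S) y (\<beta> y) k"
    using translates_matching[OF G.is_monoid S _ inj_U inj_O] A(3) H target by blast
  have "card ?F \<le> card ((A <#>\<^bsub>G\<^esub> K) \<times> F)"
    by (rule card_image_le) (use A K fin in \<open>simp add: set_mult_def\<close>)
  then have "m * card ?F \<le> m * (card (A <#>\<^bsub>G\<^esub> K) * card F)"
    by (simp add: card_cartesian_product)
  also have "\<dots> \<le> card A * (2 * m * card F)"
    using A(4) by (simp add: mult_le_mono)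
  also have "\<dots> \<le> card ?U"
    using card_U card_image[OF inj_U] by (simp add: card_cartesian_product)
  finally have card: "m * card ?F \<le> card ?U" .
  have blocking: "\<forall>ps. is_path (carrier G) (cayley_adj G S) ps \<and> hd ps \<in> ?U \<and> last ps \<in> ?O
    \<longrightarrow> set ps \<inter> ?F \<noteq> {} \<or> r \<le> length ps - 1"
  proof (intro allI impI disjCI)
    fix ps assume path: "is_path (carrier G) (cayley_adj G S) ps \<and> hd ps \<in> ?U \<and> last ps \<in> ?O"
      and short: "\<not> r \<le> length ps - 1"
    show "set ps \<inter> ?F \<noteq> {}"
    proof (rule lifted_fence_meets_short_walks[OF grp sub S blocks UR FR rep fence A(3)])
      show "is_walk (carrier G) (cayley_adj G S) ps" using path by (simp add: is_path_def)
      show "hd ps \<in> ?U" "H #>\<^bsub>G\<^esub> last ps \<in> Ob" using path over_O by blast+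
      show "length ps - 1 < r" using short by simp
    qed
  qed
  have carrier: "?U \<subseteq> carrier G" "?F \<subseteq> carrier G" "?O \<subseteq> carrier G"
    using over_U over_F over_O by blast+
  have finite: "finite ?U" "finite ?F" "finite ?O"
    using A K fin by (simp_all add: set_mult_def)
  have disjoint: "?U \<inter> ?F = {}" "?U \<inter> ?O = {}" "?F \<inter> ?O = {}"
    using over_U over_F over_O disj by blast+
  have nonempty: "?U \<noteq> {}" using A(2) \<open>U \<noteq> {}\<close> by auto
  show ?thesis
    unfolding is_UFO_def
    by (intro conjI exI[of _ \<beta>]) (fact carrier finite disjoint nonempty card \<beta> dist blocking)+
qed

lemma schreier_walk_endpoint_lift:
  assumes "group G" "subgroup H G" "S \<subseteq> carrier G"
    and "graph_dist_le (rcosets\<^bsub>G\<^esub> H) (schreier_adj G H S) C D k" and "x \<in> C"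
  obtains y where "y \<in> carrier G" "H #>\<^bsub>G\<^esub> y = D" "graph_dist_le (carrier G) (cayley_adj G S) x y k"
proof -
  obtain qs where qs: "is_walk (rcosets\<^bsub>G\<^esub> H) (schreier_adj G H S) qs" "hd qs = C" "last qs = D"
    "length qs - 1 \<le> k"
    using assms(4) unfolding graph_dist_le_def by blast
  then obtain ps where ps: "is_walk (carrier G) (cayley_adj G S) ps" "hd ps = x"
    "map (\<lambda>y. H #>\<^bsub>G\<^esub> y) ps = qs"
    using schreier_walk_lift[OF assms(1-3)] assms(5) by blast
  have "ps \<noteq> []" using ps(1) by (simp add: is_walk_def)
  then have "last ps \<in> carrier G" "H #>\<^bsub>G\<^esub> last ps = D"
    using ps qs(3) by (auto simp: is_walk_def last_map)
  moreover have "graph_dist_le (carrier G) (cayley_adj G S) x (last ps) k"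
    unfolding graph_dist_le_def using ps qs(4) by auto
  ultimately show thesis using that by blast
qed

lemma schreier_matching_lift:
  assumes "group G" "subgroup H G" "S \<subseteq> carrier G"
    and \<mu>: "bij_betw \<mu> U Ob" "\<forall>u\<in>U. graph_dist_le (rcosets\<^bsub>G\<^esub> H) (schreier_adj G H S) u (\<mu> u) k"
    and x: "\<And>u. u \<in> U \<Longrightarrow> x u \<in> u"
  obtains t where "\<And>u. u \<in> U \<Longrightarrow> t u \<in> carrier G \<and> H #>\<^bsub>G\<^esub> t u \<in> Ob
      \<and> graph_dist_le (carrier G) (cayley_adj G S) (x u) (t u) k"
    "inj_on (\<lambda>u. H #>\<^bsub>G\<^esub> t u) U"
proof -
  have endpoints: "\<forall>u\<in>U. \<exists>y. y \<in> carrier G \<and> H #>\<^bsub>G\<^esub> y = \<mu> u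
    \<and> graph_dist_le (carrier G) (cayley_adj G S) (x u) y k"
  proof
    fix u assume u: "u \<in> U"
    obtain y where "y \<in> carrier G" "H #>\<^bsub>G\<^esub> y = \<mu> u" "graph_dist_le (carrier G) (cayley_adj G S) (x u) y k"
      by (rule schreier_walk_endpoint_lift[OF assms(1-3) \<mu>(2)[rule_format, OF u] x[OF u]])
    then show "\<exists>y. y \<in> carrier G \<and> H #>\<^bsub>G\<^esub> y = \<mu> u
      \<and> graph_dist_le (carrier G) (cayley_adj G S) (x u) y k" by blast
  qed
  obtain t where t: "\<forall>u\<in>U. t u \<in> carrier G \<and> H #>\<^bsub>G\<^esub> t u = \<mu> u
    \<and> graph_dist_le (carrier G) (cayley_adj G S) (x u) (t u) k"
    using bchoice[OF endpoints] by blast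
  have "t u \<in> carrier G \<and> H #>\<^bsub>G\<^esub> t u \<in> Ob \<and> graph_dist_le (carrier G) (cayley_adj G S) (x u) (t u) k"
    if "u \<in> U" for u
    using t bij_betwE[OF \<mu>(1)] that by auto
  moreover have "inj_on (\<lambda>u. H #>\<^bsub>G\<^esub> t u) U"
    using bij_betw_imp_inj_on[OF \<mu>(1)] t by (simp add: inj_on_def)
  ultimately show thesis using that by blast
qed

lemma schreier_UFO_lifts_to_cayley:
  assumes grp: "group G" and sub: "subgroup H G" and amenable: "amenable (G\<lparr>carrier := H\<rparr>)"
    and S: "S \<subseteq> carrier G" "finite S"
    and UFO: "is_UFO (rcosets\<^bsub>G\<^esub> H) (schreier_adj G H S) (2 * m) k r U F Ob"
  shows "\<exists>U' F' O'. is_UFO (carrier G) (cayley_adj G S) m k r U' F' O'"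
proof -
  define rep where "rep C = (SOME x. x \<in> C)" for C :: "'a set"
  have rep: "rep C \<in> C" if "C \<in> rcosets\<^bsub>G\<^esub> H" for C
    using subgroup.rcosets_non_empty[OF sub that] unfolding rep_def by (simp add: some_in_eq)
  have UR: "U \<subseteq> rcosets\<^bsub>G\<^esub> H" and fin: "finite U" "finite F"
    using UFO by (simp_all add: is_UFO_def)
  have "\<exists>\<mu>. bij_betw \<mu> U Ob \<and> (\<forall>u\<in>U. graph_dist_le (rcosets\<^bsub>G\<^esub> H) (schreier_adj G H S) u (\<mu> u) k)"
    using UFO by (simp add: is_UFO_def)
  then obtain \<mu> where \<mu>: "bij_betw \<mu> U Ob"
    "\<forall>u\<in>U. graph_dist_le (rcosets\<^bsub>G\<^esub> H) (schreier_adj G H S) u (\<mu> u) k"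
    by blast
  have rep_U: "rep u \<in> u" if "u \<in> U" for u
    using rep UR that by blast
  obtain t where target: "\<And>u. u \<in> U \<Longrightarrow> t u \<in> carrier G \<and> H #>\<^bsub>G\<^esub> t u \<in> Ob
      \<and> graph_dist_le (carrier G) (cayley_adj G S) (rep u) (t u) k"
    and inj_t: "inj_on (\<lambda>u. H #>\<^bsub>G\<^esub> t u) U"
    using schreier_matching_lift[OF grp sub S(1) \<mu> rep_U] by blast
  define K where "K = H \<inter> (\<lambda>((u, z), f). rep u \<otimes>\<^bsub>G\<^esub> z \<otimes>\<^bsub>G\<^esub> inv\<^bsub>G\<^esub> (rep f)) ` ((U \<times> word_ball G S r) \<times> F)"
  have K: "finite K" "K \<subseteq> carrier (G\<lparr>carrier := H\<rparr>)"
    unfolding K_def using fin finite_word_ball[OF S(2)]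
    by (auto intro!: finite_Int disjI2 finite_imageI finite_cartesian_product)
  have fence: "rep u \<otimes>\<^bsub>G\<^esub> z \<otimes>\<^bsub>G\<^esub> inv\<^bsub>G\<^esub> (rep f) \<in> K"
    if "u \<in> U" "z \<in> word_ball G S r" "f \<in> F" "rep u \<otimes>\<^bsub>G\<^esub> z \<otimes>\<^bsub>G\<^esub> inv\<^bsub>G\<^esub> (rep f) \<in> H" for u z f
    unfolding K_def using that by (auto intro!: image_eqI[where x = "((u, z), f)"])
  obtain A where A: "finite A" "A \<noteq> {}" "A \<subseteq> H" "card (A <#>\<^bsub>G\<^esub> K) < 2 * card A"
    using amenable_small_right_doubling[OF subgroup.subgroup_is_group[OF sub grp] amenable K] by auto
  show ?thesis
    using cayley_UFO_from_schreier_UFO[OF grp sub S(1) UFO rep target inj_t K(1) _ fence A] K(2) by auto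
qed

theorem mainTheorem7:
  fixes G :: "('a, 'b) monoid_scheme" and H S :: "'a set"
  assumes "group G"
    and "finitely_generated G"
    and "subgroup H G"
    and "amenable (G\<lparr>carrier := H\<rparr>)"
    and "symmetric_gen_set G S"
    and "extraterrestrial (rcosets\<^bsub>G\<^esub> H) (schreier_adj G H S)"
  shows "extraterrestrial_group G"
proof -
  \<comment> \<open>\<open>finitely_generated G\<close> is implied by \<open>symmetric_gen_set G S\<close> and not needed.\<close>
  have S: "S \<subseteq> carrier G" "finite S"
    using assms(5) unfolding symmetric_gen_set_def by auto
  have "extraterrestrial (carrier G) (cayley_adj G S)"
    unfolding extraterrestrial_def
  proof
    fix m :: nat
    obtain k where "\<forall>r. \<exists>U F Ob. is_UFO (rcosets\<^bsub>G\<^esub> H) (schreier_adj G H S) (2 * m) k r U F Ob"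
      using assms(6) unfolding extraterrestrial_def by blast
    then show "\<exists>k. \<forall>r. \<exists>U F Ob. is_UFO (carrier G) (cayley_adj G S) m k r U F Ob"
      using schreier_UFO_lifts_to_cayley[OF assms(1,3,4) S] by blast
  qed
  then show ?thesis
    using assms(5) unfolding extraterrestrial_group_def by blast
qed

end
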